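(* Let $b,\delta\in\mathbb R$ and let $\pi:(0,\infty)\to(0,\infty)$ be integrable and such that $\pi(u)\big/\Big[(1+u)^{-(1+\delta)}\{1+\log(1+u)\}^{-(1+b)}\Big]$ converges to a positive finite constant as $u\to\infty$. Then for every $z\in\mathbb R$, $$\frac{f_\pi(y;z)}{f_\pi(y;0)}\to e^{\delta z}\quad\text{as }y\to\infty\ (y\in\{0,1,2,\dots\}).$$
   Context: For integrable $\pi:(0,\infty)\to(0,\infty)$, $y\in\{0,1,2,\dots\}$ and $z\in\mathbb R$, define $f_\pi(y;z)=\int_0^\infty\pi(u)\frac{(e^zu)^y}{y!}\exp(-e^zu)\,du$, the Poisson likelihood of $y$ with mean $e^zu$ mixed over $u\sim\pi$. *)

theory Defs
  imports "HOL-Analysis.Analysis"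
begin

definition f_mix :: "(real \<Rightarrow> real) \<Rightarrow> nat \<Rightarrow> real \<Rightarrow> real" where
  "f_mix \<pi> y z = (LBINT u:{0<..}. \<pi> u * (exp z * u) ^ y / fact y * exp (- (exp z * u)))"

end

theory Submission
  imports Defs "HOL-Real_Asymp.Real_Asymp"
begin

text \<open>
  Substituting v = e^z u turns f_pi(y;z) into the mixture of the Poisson kernel
  v^y e^-v / y! against the rescaled density pi(v e^-z) e^-z, whose ratio to pi(v) tends
  to e^(delta z) because pi is regularly varying with index -(1 + delta).  Relative to pi,
  the kernel concentrates at infinity as y grows: on (0, M] it is at most M^y / y!,
  whereas the window (y, y + 1] alone gives the mixture against pi a mass of order
  y^y e^-y / y! up to a factor polynomial-logarithmic in y.  So only the tails of the
  densities matter, and the ratio of the mixtures inherits the limit of the ratio of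
  the densities.
\<close>

section \<open>Poisson mixtures\<close>

definition poisson_kernel :: "nat \<Rightarrow> real \<Rightarrow> real" where
  "poisson_kernel y v = v ^ y / fact y * exp (- v)"

definition poisson_mixture :: "(real \<Rightarrow> real) \<Rightarrow> nat \<Rightarrow> real" where
  "poisson_mixture H y = (LBINT v:{0<..}. H v * poisson_kernel y v)"

lemma power_div_fact_le_exp:
  fixes x :: real
  assumes "x \<ge> 0"
  shows "x ^ n / fact n \<le> exp x"
proof -
  have s: "(\<lambda>n. x ^ n /\<^sub>R fact n) sums exp x"
    by (rule exp_converges)
  have "(\<Sum>i\<in>{n}. x ^ i /\<^sub>R fact i) \<le> (\<Sum>i. x ^ i /\<^sub>R fact i)"
    by (rule sum_le_suminf) (use s assms in \<open>auto simp: sums_iff\<close>)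
  then show ?thesis
    using s by (simp add: sums_iff divide_inverse mult.commute)
qed

lemma poisson_kernel_nonneg: "v \<ge> 0 \<Longrightarrow> poisson_kernel y v \<ge> 0"
  by (simp add: poisson_kernel_def)

lemma poisson_kernel_le_one:
  assumes "v \<ge> 0"
  shows "poisson_kernel y v \<le> 1"
proof -
  have "poisson_kernel y v \<le> exp v * exp (- v)"
    unfolding poisson_kernel_def
    by (rule mult_right_mono) (use power_div_fact_le_exp[OF assms] in auto)
  then show ?thesis
    by (simp add: exp_minus)
qed

lemma poisson_kernel_le_power:
  assumes "0 \<le> v" "v \<le> M"
  shows "poisson_kernel y v \<le> M ^ y / fact y"
proof -
  have "poisson_kernel y v \<le> M ^ y / fact y * 1"
    unfolding poisson_kernel_def
    by (rule mult_mono) (use assms in \<open>auto intro!: divide_right_mono power_mono\<close>)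
  then show ?thesis
    by simp
qed

lemma borel_measurable_poisson_kernel [measurable]: "poisson_kernel y \<in> borel_measurable borel"
  unfolding poisson_kernel_def by measurable

lemma set_integrable_mult_poisson_kernel:
  assumes "set_integrable lborel {0<..} H"
  shows "set_integrable lborel {0<..} (\<lambda>v. H v * poisson_kernel y v)"
  unfolding set_integrable_def
proof (rule Bochner_Integration.integrable_bound)
  show iH: "integrable lborel (\<lambda>v. indicator {0<..} v *\<^sub>R H v)"
    using assms by (simp add: set_integrable_def)
  have "(\<lambda>v. (indicator {0<..} v *\<^sub>R H v) * poisson_kernel y v) \<in> borel_measurable lborel"
    using borel_measurable_integrable[OF iH] by measurable
  then show "(\<lambda>v. indicator {0<..} v *\<^sub>R (H v * poisson_kernel y v)) \<in> borel_measurable lborel"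
    by (simp add: mult.assoc)
  show "AE v in lborel. norm (indicator {0<..} v *\<^sub>R (H v * poisson_kernel y v))
          \<le> norm (indicator {0<..} v *\<^sub>R H v)"
  proof (rule AE_I2)
    fix v :: real
    have "\<bar>H v\<bar> * \<bar>poisson_kernel y v\<bar> \<le> \<bar>H v\<bar>" if "v > 0"
      using that poisson_kernel_nonneg[of v y] poisson_kernel_le_one[of v y]
      by (simp add: mult_left_le)
    then show "norm (indicator {0<..} v *\<^sub>R (H v * poisson_kernel y v)) \<le> norm (indicator {0<..} v *\<^sub>R H v)"
      by (cases "v > 0") (auto simp: abs_mult)
  qed
qed

lemma set_integrable_rescale:
  fixes a :: real
  assumes "a > 0" "set_integrable lborel {0<..} H"
  shows "set_integrable lborel {0<..} (\<lambda>v. H (v / a) / a)"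
proof -
  have "integrable lborel (\<lambda>x. indicator {0<..} (0 + 1/a * x) * H (0 + 1/a * x) / a)"
    using assms by (intro integrable_divide lborel_integrable_real_affine)
      (auto simp: set_integrable_def)
  then show ?thesis
    using assms by (simp add: set_integrable_def indicator_def zero_less_divide_iff)
qed

lemma f_mix_eq_poisson_mixture:
  "f_mix \<pi> y z = poisson_mixture (\<lambda>v. \<pi> (v / exp z) / exp z) y"
proof -
  define a where "a = exp z"
  have a: "a > 0"
    by (simp add: a_def)
  define h where "h v = indicator {0<..} v * (\<pi> (v / a) / a * poisson_kernel y v)" for v
  have "f_mix \<pi> y z = (\<integral>u. a * h (0 + a * u) \<partial>lborel)"
    unfolding f_mix_def set_lebesgue_integral_def h_def
    using a by (intro Bochner_Integration.integral_cong)
      (auto simp: a_def poisson_kernel_def indicator_def zero_less_mult_iff)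
  also have "\<dots> = (\<integral>v. h v \<partial>lborel)"
    using a lborel_integral_real_affine[of a h 0] by simp
  also have "\<dots> = poisson_mixture (\<lambda>v. \<pi> (v / exp z) / exp z) y"
    by (simp add: poisson_mixture_def set_lebesgue_integral_def h_def a_def)
  finally show ?thesis .
qed

section \<open>Ratios of Poisson mixtures\<close>

lemma poisson_mixture_diff_bound:
  fixes F G :: "real \<Rightarrow> real"
  assumes F: "\<And>v. v > 0 \<Longrightarrow> F v \<ge> 0" and G: "\<And>v. v > 0 \<Longrightarrow> G v \<ge> 0"
    and iF: "set_integrable lborel {0<..} F" and iG: "set_integrable lborel {0<..} G"
    and M: "M \<ge> 0" and \<epsilon>: "\<epsilon> \<ge> 0"
    and close: "\<And>v. v \<ge> M \<Longrightarrow> \<bar>F v - L * G v\<bar> \<le> \<epsilon> * G v"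
  shows "\<bar>poisson_mixture F y - L * poisson_mixture G y\<bar>
           \<le> \<epsilon> * poisson_mixture G y
              + M ^ y / fact y * ((LBINT v:{0<..}. F v) + \<bar>L\<bar> * (LBINT v:{0<..}. G v))"
proof -
  let ?P = "poisson_kernel y"
  define h where "h = (\<lambda>v. F v * ?P v - L * (G v * ?P v))"
  define g where "g = (\<lambda>v. \<epsilon> * (G v * ?P v) + M ^ y / fact y * (F v + \<bar>L\<bar> * G v))"
  have iFP: "set_integrable lborel {0<..} (\<lambda>v. F v * ?P v)"
    and iGP: "set_integrable lborel {0<..} (\<lambda>v. G v * ?P v)"
    using iF iG by (auto intro: set_integrable_mult_poisson_kernel)
  have pointwise: "\<bar>h v\<bar> \<le> g v" if "v > 0" for v
  proof -
    have P: "0 \<le> ?P v"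
      using that by (simp add: poisson_kernel_nonneg)
    have "h v = (F v - L * G v) * ?P v"
      by (simp add: h_def algebra_simps)
    then have "\<bar>h v\<bar> = \<bar>F v - L * G v\<bar> * ?P v"
      using P by (simp add: abs_mult)
    also have "\<dots> \<le> g v"
    proof (cases "v \<ge> M")
      case True
      then have "\<bar>F v - L * G v\<bar> * ?P v \<le> \<epsilon> * G v * ?P v"
        using P close by (intro mult_right_mono) auto
      moreover have "0 \<le> M ^ y / fact y * (F v + \<bar>L\<bar> * G v)"
        using F G M that by simp
      ultimately show ?thesis
        by (simp add: g_def)
    next
      case False
      have "\<bar>F v - L * G v\<bar> \<le> F v + \<bar>L\<bar> * G v"
        using F G that by (simp add: abs_mult abs_triangle_ineq4 order_trans[OF abs_triangle_ineq4])
      moreover have "?P v \<le> M ^ y / fact y"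
        using False that by (intro poisson_kernel_le_power) auto
      ultimately have "\<bar>F v - L * G v\<bar> * ?P v \<le> (F v + \<bar>L\<bar> * G v) * (M ^ y / fact y)"
        using P by (intro mult_mono) auto
      moreover have "0 \<le> \<epsilon> * (G v * ?P v)"
        using \<epsilon> G P that by simp
      ultimately show ?thesis
        by (simp add: g_def mult.commute)
    qed
    finally show ?thesis .
  qed
  have ih: "set_integrable lborel {0<..} h" and ig: "set_integrable lborel {0<..} g"
    using iFP iGP iF iG by (auto simp: h_def g_def)
  have "poisson_mixture F y - L * poisson_mixture G y = (LBINT v:{0<..}. h v)"
    using iFP iGP by (simp add: poisson_mixture_def h_def)
  moreover have "\<bar>LBINT v:{0<..}. h v\<bar> \<le> (LBINT v:{0<..}. \<bar>h v\<bar>)"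
    using set_integral_norm_bound[OF ih] by simp
  moreover have "(LBINT v:{0<..}. \<bar>h v\<bar>) \<le> (LBINT v:{0<..}. g v)"
    using pointwise by (intro set_integral_mono set_integrable_abs ih ig) auto
  moreover have "(LBINT v:{0<..}. g v) = \<epsilon> * poisson_mixture G y
      + M ^ y / fact y * ((LBINT v:{0<..}. F v) + \<bar>L\<bar> * (LBINT v:{0<..}. G v))"
    using iGP iF iG by (simp add: poisson_mixture_def g_def)
  ultimately show ?thesis
    by simp
qed

lemma poisson_mixture_ratio_tendsto:
  fixes F G :: "real \<Rightarrow> real"
  assumes F: "\<And>v. v > 0 \<Longrightarrow> F v \<ge> 0" and G: "\<And>v. v > 0 \<Longrightarrow> G v > 0"
    and iF: "set_integrable lborel {0<..} F" and iG: "set_integrable lborel {0<..} G"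
    and lim: "((\<lambda>v. F v / G v) \<longlongrightarrow> L) at_top"
    and small: "\<And>M. M > 0 \<Longrightarrow> ((\<lambda>y. M ^ y / fact y / poisson_mixture G y) \<longlongrightarrow> 0) sequentially"
    and pos: "eventually (\<lambda>y. poisson_mixture G y > 0) sequentially"
  shows "((\<lambda>y. poisson_mixture F y / poisson_mixture G y) \<longlongrightarrow> L) sequentially"
proof (rule tendstoI)
  fix \<epsilon> :: real
  assume \<epsilon>: "\<epsilon> > 0"
  obtain M0 where M0: "\<And>v. v \<ge> M0 \<Longrightarrow> \<bar>F v / G v - L\<bar> < \<epsilon> / 2"
    using tendstoD[OF lim half_gt_zero[OF \<epsilon>]]
    by (auto simp: eventually_at_top_linorder dist_real_def)
  define M where "M = max M0 1"
  define K where "K = (LBINT v:{0<..}. F v) + \<bar>L\<bar> * (LBINT v:{0<..}. G v)"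
  have close: "\<bar>F v - L * G v\<bar> \<le> \<epsilon> / 2 * G v" if "v \<ge> M" for v
  proof -
    have G0: "G v > 0"
      using G that by (simp add: M_def)
    then have "F v / G v - L = (F v - L * G v) / G v"
      by (simp add: field_simps)
    then have "\<bar>F v - L * G v\<bar> / G v < \<epsilon> / 2"
      using M0[of v] G0 that by (simp add: M_def abs_divide)
    then show ?thesis
      using G0 by (simp add: divide_less_eq)
  qed
  have "((\<lambda>y. K * (M ^ y / fact y / poisson_mixture G y)) \<longlongrightarrow> K * 0) sequentially"
    by (intro tendsto_mult tendsto_const small) (simp add: M_def)
  then have "eventually (\<lambda>y. \<bar>K * (M ^ y / fact y / poisson_mixture G y)\<bar> < \<epsilon> / 2) sequentially"
    using tendstoD[OF _ half_gt_zero[OF \<epsilon>]] by (force simp: dist_real_def)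
  with pos show "eventually (\<lambda>y. dist (poisson_mixture F y / poisson_mixture G y) L < \<epsilon>) sequentially"
  proof eventually_elim
    case (elim y)
    have "dist (poisson_mixture F y / poisson_mixture G y) L
        = \<bar>poisson_mixture F y - L * poisson_mixture G y\<bar> / poisson_mixture G y"
      using elim by (simp add: dist_real_def field_simps)
    also have "\<dots> \<le> (\<epsilon> / 2 * poisson_mixture G y + M ^ y / fact y * K) / poisson_mixture G y"
      using elim G \<epsilon> close unfolding K_def
      by (intro divide_right_mono poisson_mixture_diff_bound F iF iG) (auto simp: M_def less_imp_le)
    also have "\<dots> = \<epsilon> / 2 + K * (M ^ y / fact y / poisson_mixture G y)"
      using elim by (simp add: field_simps)
    also have "\<dots> < \<epsilon>"
      using elim by linarith
    finally show ?case .
  qed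
qed

section \<open>Regularly varying tails\<close>

definition tail_weight :: "real \<Rightarrow> real \<Rightarrow> real \<Rightarrow> real" where
  "tail_weight b \<delta> u = (1 + u) powr (-(1 + \<delta>)) * (1 + ln (1 + u)) powr (-(1 + b))"

definition tail_weight_lower :: "real \<Rightarrow> real \<Rightarrow> real \<Rightarrow> real" where
  "tail_weight_lower b \<delta> X = (1 + X) powr (-\<bar>1 + \<delta>\<bar>) * (1 + ln (1 + X)) powr (-\<bar>1 + b\<bar>)"

lemma powr_neg_abs_le_powr:
  fixes x X e :: real
  assumes "1 \<le> x" "x \<le> X"
  shows "X powr (-\<bar>e\<bar>) \<le> x powr e"
proof (cases "e \<ge> 0")
  case True
  have "X powr (-\<bar>e\<bar>) \<le> X powr 0"
    using assms True by (intro powr_mono) auto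
  moreover have "1 \<le> x powr e"
    using assms True by (simp add: ge_one_powr_ge_zero)
  ultimately show ?thesis
    using assms by simp
next
  case False
  then have "X powr e \<le> x powr e"
    using assms by (intro powr_mono2') auto
  then show ?thesis
    using False by simp
qed

lemma tail_weight_pos:
  assumes "u \<ge> 0"
  shows "tail_weight b \<delta> u > 0"
proof -
  have "1 + ln (1 + u) > 0"
    using assms by (simp add: add_pos_nonneg)
  then show ?thesis
    using assms by (simp add: tail_weight_def)
qed

lemma tail_weight_lower_pos:
  assumes "X \<ge> 0"
  shows "tail_weight_lower b \<delta> X > 0"
proof -
  have "1 + ln (1 + X) > 0"
    using assms by (simp add: add_pos_nonneg)
  then show ?thesis
    using assms by (simp add: tail_weight_lower_def)
qed

lemma tail_weight_ge_lower:
  assumes "0 \<le> v" "v \<le> X"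
  shows "tail_weight_lower b \<delta> X \<le> tail_weight b \<delta> v"
  unfolding tail_weight_def tail_weight_lower_def
proof (rule mult_mono)
  show "(1 + X) powr (-\<bar>1 + \<delta>\<bar>) \<le> (1 + v) powr (-(1 + \<delta>))"
    using powr_neg_abs_le_powr[of "1 + v" "1 + X" "-(1 + \<delta>)"] assms
    unfolding abs_minus_cancel by simp
  show "(1 + ln (1 + X)) powr (-\<bar>1 + b\<bar>) \<le> (1 + ln (1 + v)) powr (-(1 + b))"
    using powr_neg_abs_le_powr[of "1 + ln (1 + v)" "1 + ln (1 + X)" "-(1 + b)"] assms
    unfolding abs_minus_cancel by simp
qed auto

lemma tail_weight_rescale_tendsto:
  fixes a :: real
  assumes "a > 0"
  shows "((\<lambda>v. tail_weight b \<delta> (v / a) / tail_weight b \<delta> v) \<longlongrightarrow> a powr (1 + \<delta>)) at_top"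
proof -
  have "((\<lambda>v. tail_weight b \<delta> (v / a) / tail_weight b \<delta> v) \<longlongrightarrow> inverse a powr (-1 - \<delta>)) at_top"
    unfolding tail_weight_def using assms by real_asymp
  moreover have "inverse a powr (-1 - \<delta>) = a powr (1 + \<delta>)"
    using assms by (simp add: inverse_powr add.commute flip: powr_minus)
  ultimately show ?thesis
    by simp
qed

lemma rescaled_ratio_tendsto:
  fixes \<pi> :: "real \<Rightarrow> real" and a c :: real
  assumes pos: "\<And>u. u > 0 \<Longrightarrow> \<pi> u > 0" and a: "a > 0" and c: "c > 0"
    and tail: "((\<lambda>u. \<pi> u / tail_weight b \<delta> u) \<longlongrightarrow> c) at_top"
  shows "((\<lambda>v. \<pi> (v / a) / a / \<pi> v) \<longlongrightarrow> a powr \<delta>) at_top"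
proof -
  let ?w = "tail_weight b \<delta>"
  have "filterlim (\<lambda>v. inverse a * v) at_top at_top"
    using a by (intro filterlim_tendsto_pos_mult_at_top[OF tendsto_const _ filterlim_ident]) simp
  then have "filterlim (\<lambda>v. v / a) at_top at_top"
    by (simp add: divide_inverse_commute)
  then have "((\<lambda>v. 1 / a * (\<pi> (v / a) / ?w (v / a)) * inverse (\<pi> v / ?w v) * (?w (v / a) / ?w v))
      \<longlongrightarrow> 1 / a * c * inverse c * a powr (1 + \<delta>)) at_top"
    using c by (intro tendsto_mult tendsto_const tendsto_inverse tail tail_weight_rescale_tendsto a
        filterlim_compose[OF tail]) auto
  moreover have "1 / a * c * inverse c * a powr (1 + \<delta>) = a powr \<delta>"
    using a c by (simp add: powr_add)
  moreover have "eventually (\<lambda>v. 1 / a * (\<pi> (v / a) / ?w (v / a)) * inverse (\<pi> v / ?w v) * (?w (v / a) / ?w v)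
      = \<pi> (v / a) / a / \<pi> v) at_top"
    using eventually_gt_at_top[of 0]
  proof eventually_elim
    case (elim v)
    then have "?w (v / a) > 0" "?w v > 0" "\<pi> v > 0"
      using a pos tail_weight_pos by auto
    then show ?case
      by (simp add: field_simps)
  qed
  ultimately show ?thesis
    using Lim_transform_eventually by fastforce
qed

section \<open>A lower bound for the mixture\<close>

definition poisson_window_mass :: "nat \<Rightarrow> real" where
  "poisson_window_mass n = real n ^ n * exp (- (real n + 1)) / fact n"

lemma poisson_window_mass_pos: "poisson_window_mass n > 0"
  by (cases n) (simp_all add: poisson_window_mass_def)

lemma poisson_kernel_ge_window_mass:
  assumes "real n \<le> v" "v \<le> real n + 1"
  shows "poisson_window_mass n \<le> poisson_kernel n v"
  unfolding poisson_window_mass_def poisson_kernel_def using assms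
  by (auto intro!: divide_right_mono mult_mono power_mono)

lemma poisson_mixture_ge_window:
  fixes H :: "real \<Rightarrow> real"
  assumes H: "\<And>v. v > 0 \<Longrightarrow> H v \<ge> 0" and iH: "set_integrable lborel {0<..} H"
    and C: "C \<ge> 0" "\<And>v. real n < v \<Longrightarrow> v \<le> real n + 1 \<Longrightarrow> C \<le> H v"
  shows "C * poisson_window_mass n \<le> poisson_mixture H n"
proof -
  define K where "K = C * poisson_window_mass n"
  have pointwise: "indicator {real n<..real n + 1} v * K
      \<le> indicator {0<..} v * (H v * poisson_kernel n v)" for v
  proof (cases "v \<in> {real n<..real n + 1}")
    case True
    then have v: "real n < v" "v \<le> real n + 1" "v > 0"
      by auto
    have "C \<le> H v"
      using C(2) v by simp
    then have "K \<le> H v * poisson_kernel n v"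
      unfolding K_def using C(1) v poisson_window_mass_pos[of n]
      by (intro mult_mono poisson_kernel_ge_window_mass) auto
    then show ?thesis
      using True v by simp
  next
    case False
    then show ?thesis
      using H[of v] poisson_kernel_nonneg[of v n] by (cases "v > 0") auto
  qed
  have "K = (\<integral>v. indicator {real n<..real n + 1} v * K \<partial>lborel)"
    by simp
  also have "\<dots> \<le> (\<integral>v. indicator {0<..} v * (H v * poisson_kernel n v) \<partial>lborel)"
    using set_integrable_mult_poisson_kernel[OF iH]
    by (intro integral_mono pointwise) (auto simp: set_integrable_def)
  also have "\<dots> = poisson_mixture H n"
    by (simp add: poisson_mixture_def set_lebesgue_integral_def)
  finally show ?thesis
    by (simp add: K_def)
qed

lemma poisson_mixture_ge_tail:
  fixes \<pi> :: "real \<Rightarrow> real" and c :: real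
  assumes pos: "\<And>u. u > 0 \<Longrightarrow> \<pi> u > 0" and integ: "set_integrable lborel {0<..} \<pi>"
    and c: "c > 0" and tail: "((\<lambda>u. \<pi> u / tail_weight b \<delta> u) \<longlongrightarrow> c) at_top"
  shows "eventually (\<lambda>n. c / 2 * tail_weight_lower b \<delta> (real n + 1) * poisson_window_mass n
           \<le> poisson_mixture \<pi> n) sequentially"
proof -
  obtain M where M: "\<And>u. u \<ge> M \<Longrightarrow> c / 2 < \<pi> u / tail_weight b \<delta> u"
    using order_tendstoD(1)[OF tail, of "c / 2"] c by (auto simp: eventually_at_top_linorder)
  have "eventually (\<lambda>n. real n \<ge> M) sequentially"
    using filterlim_real_sequentially by (simp add: filterlim_at_top)
  then show ?thesis
  proof (rule eventually_mono)
    fix n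
    assume n: "real n \<ge> M"
    let ?w = "tail_weight_lower b \<delta> (real n + 1)"
    show "c / 2 * ?w * poisson_window_mass n \<le> poisson_mixture \<pi> n"
    proof (rule poisson_mixture_ge_window)
      show "0 \<le> c / 2 * ?w"
        using c tail_weight_lower_pos[of "real n + 1" b \<delta>] by simp
      fix v
      assume v: "real n < v" "v \<le> real n + 1"
      then have "?w \<le> tail_weight b \<delta> v"
        by (intro tail_weight_ge_lower) auto
      moreover have "c / 2 * tail_weight b \<delta> v \<le> \<pi> v"
        using M[of v] n v tail_weight_pos[of v b \<delta>] by (simp add: pos_less_divide_eq)
      ultimately show "c / 2 * ?w \<le> \<pi> v"
        using c by (meson half_gt_zero less_imp_le mult_left_mono order_trans)
    qed (use pos integ in \<open>auto simp: less_imp_le\<close>)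
  qed
qed

lemma poisson_mixture_eventually_pos:
  fixes \<pi> :: "real \<Rightarrow> real" and c :: real
  assumes pos: "\<And>u. u > 0 \<Longrightarrow> \<pi> u > 0" and integ: "set_integrable lborel {0<..} \<pi>"
    and c: "c > 0" and tail: "((\<lambda>u. \<pi> u / tail_weight b \<delta> u) \<longlongrightarrow> c) at_top"
  shows "eventually (\<lambda>n. poisson_mixture \<pi> n > 0) sequentially"
  using poisson_mixture_ge_tail[OF pos integ c tail]
proof (rule eventually_mono)
  fix n
  have "0 < c / 2 * tail_weight_lower b \<delta> (real n + 1) * poisson_window_mass n"
    using c tail_weight_lower_pos poisson_window_mass_pos by simp
  then show "c / 2 * tail_weight_lower b \<delta> (real n + 1) * poisson_window_mass n \<le> poisson_mixture \<pi> n
      \<Longrightarrow> 0 < poisson_mixture \<pi> n"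
    by linarith
qed

lemma power_div_fact_div_poisson_mixture_tendsto_0:
  fixes \<pi> :: "real \<Rightarrow> real" and c M :: real
  assumes pos: "\<And>u. u > 0 \<Longrightarrow> \<pi> u > 0" and integ: "set_integrable lborel {0<..} \<pi>"
    and c: "c > 0" and tail: "((\<lambda>u. \<pi> u / tail_weight b \<delta> u) \<longlongrightarrow> c) at_top"
    and M: "M > 0"
  shows "((\<lambda>n. M ^ n / fact n / poisson_mixture \<pi> n) \<longlongrightarrow> 0) sequentially"
proof -
  define r where "r x = 2 / c * exp 1 * ((M * exp 1 / x) powr x / tail_weight_lower b \<delta> (x + 1))"
    for x :: real
  have "(r \<longlongrightarrow> 0) at_top"
    unfolding r_def tail_weight_lower_def using M by real_asymp
  then have lim: "((\<lambda>n. r (real n)) \<longlongrightarrow> 0) sequentially"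
    by (rule filterlim_compose[OF _ filterlim_real_sequentially])
  have bound: "eventually (\<lambda>n. \<bar>M ^ n / fact n / poisson_mixture \<pi> n\<bar> \<le> r (real n)) sequentially"
    using eventually_conj[OF eventually_gt_at_top[of "0::nat"] poisson_mixture_ge_tail[OF pos integ c tail]]
  proof (rule eventually_mono)
    fix n :: nat
    define Q where "Q = c / 2 * tail_weight_lower b \<delta> (real n + 1) * poisson_window_mass n"
    assume "0 < n \<and> c / 2 * tail_weight_lower b \<delta> (real n + 1) * poisson_window_mass n
      \<le> poisson_mixture \<pi> n"
    then have n: "n > 0" and Q: "Q \<le> poisson_mixture \<pi> n"
      by (simp_all add: Q_def)
    have w: "tail_weight_lower b \<delta> (real n + 1) > 0"
      by (simp add: tail_weight_lower_pos)
    have "Q > 0"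
      using c w poisson_window_mass_pos by (simp add: Q_def)
    then have "\<bar>M ^ n / fact n / poisson_mixture \<pi> n\<bar> \<le> M ^ n / fact n / Q"
      using Q M by (simp add: abs_divide divide_left_mono)
    also have "\<dots> = r (real n)"
    proof -
      have "exp (- (real n + 1)) = 1 / (exp 1 ^ n * exp 1)"
        by (simp add: exp_of_nat_mult[symmetric] exp_add[symmetric] exp_minus_inverse
            flip: exp_minus inverse_eq_divide)
      then show ?thesis
        unfolding Q_def r_def poisson_window_mass_def using n c M w
        by (simp add: powr_realpow power_divide power_mult_distrib field_simps)
    qed
    finally show "\<bar>M ^ n / fact n / poisson_mixture \<pi> n\<bar> \<le> r (real n)" .
  qed
  show ?thesis
    by (rule Lim_null_comparison[OF _ lim]) (use bound in simp)
qed

theorem lemmaS1: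
  fixes \<pi> :: "real \<Rightarrow> real" and b \<delta> :: real
  assumes pos: "\<And>u. u > 0 \<Longrightarrow> \<pi> u > 0"
    and integ: "set_integrable lborel {0<..} \<pi>"
    and tail: "\<exists>c>0. ((\<lambda>u. \<pi> u / ((1 + u) powr (-(1 + \<delta>)) * (1 + ln (1 + u)) powr (-(1 + b))))
                 \<longlongrightarrow> c) at_top"
  shows "\<forall>z::real. ((\<lambda>y. f_mix \<pi> y z / f_mix \<pi> y 0) \<longlongrightarrow> exp (\<delta> * z)) sequentially"
proof
  fix z :: real
  obtain c where c: "c > 0" and tl: "((\<lambda>u. \<pi> u / tail_weight b \<delta> u) \<longlongrightarrow> c) at_top"
    using tail unfolding tail_weight_def by blast
  define F where "F = (\<lambda>v. \<pi> (v / exp z) / exp z)"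
  have "((\<lambda>y. poisson_mixture F y / poisson_mixture \<pi> y) \<longlongrightarrow> exp (\<delta> * z)) sequentially"
  proof (rule poisson_mixture_ratio_tendsto)
    show "set_integrable lborel {0<..} F"
      unfolding F_def by (intro set_integrable_rescale integ) simp
    show "((\<lambda>v. F v / \<pi> v) \<longlongrightarrow> exp (\<delta> * z)) at_top"
      using rescaled_ratio_tendsto[OF pos _ c tl, of "exp z"] by (simp add: F_def powr_def)
    show "F v \<ge> 0" if "v > 0" for v
      using pos[of "v / exp z"] that by (simp add: F_def)
    show "eventually (\<lambda>y. poisson_mixture \<pi> y > 0) sequentially"
      by (rule poisson_mixture_eventually_pos[OF pos integ c tl])
    show "((\<lambda>y. M ^ y / fact y / poisson_mixture \<pi> y) \<longlongrightarrow> 0) sequentially" if "M > 0" for M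
      by (rule power_div_fact_div_poisson_mixture_tendsto_0[OF pos integ c tl that])
  qed (use pos integ in auto)
  moreover have "f_mix \<pi> y z = poisson_mixture F y" and "f_mix \<pi> y 0 = poisson_mixture \<pi> y" for y
    using f_mix_eq_poisson_mixture[of \<pi> y z] f_mix_eq_poisson_mixture[of \<pi> y 0]
    by (simp_all add: F_def)
  ultimately show "((\<lambda>y. f_mix \<pi> y z / f_mix \<pi> y 0) \<longlongrightarrow> exp (\<delta> * z)) sequentially"
    by simp
qed

end
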